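(* Let $m\ge 2$ and $n$ be positive integers and $\theta\in(0,1)$. Let $\bm{D}_0\in\mathbb{R}^{m\times m}$ have i.i.d. entries distributed $\mathcal{N}(0,1/m)$, let $\bm{X}_0\in\mathbb{R}^{m\times n}$ have i.i.d. entries distributed as $BG(\theta)$ (independent of $\bm{D}_0$), and let $\bm{Y}=\bm{D}_0\bm{X}_0$. Let $\Omega$ be the support of $\bm{X}_0$ and, for $i\in[m]$, $\Omega_i\subseteq[n]$ the support of the $i$-th row of $\bm{X}_0$, with $\Omega_i^c=[n]\setminus\Omega_i$. Consider the three conditions: (C1) $n\ge m+\frac{|\Omega|}{m}-1$; (C2) for all $i\in[m]$, $|\Omega_i^c|\ge m-1$; (C3) for all $i\in[m]$ and all $i'\ne i$ in $[m]$, there exists $j\in[n]$ with $(\bm{X}_0)_{i,j}=0$ and $(\bm{X}_0)_{i',j}\ne0$. Fix $\epsilon\in(0,1)$ and define $$n_1=\frac{m-1}{1-\theta}\left[1-\frac{\ln\epsilon}{4m(m-1)(1-\theta)}+\sqrt{\left(1-\frac{\ln\epsilon}{4m(m-1)(1-\theta)}\right)^{2}-1}\right],$$ $$n_2=\frac{m-1}{1-\theta}\left[1-\frac{\ln\epsilon-\ln m}{4(m-1)(1-\theta)}+\sqrt{\left(1-\frac{\ln\epsilon-\ln m}{4(m-1)(1-\theta)}\right)^{2}-1}\right],$$ $$n_3=\frac{\ln\epsilon-\ln m-\ln(m-1)}{\ln\left(1-\theta(1-\theta)\right)}.$$ Then for each $i\in\{1,2,3\}$, if $n\ge n_i$, condition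 (C$i$) holds with probability at least $1-\epsilon$. Moreover $n_1\le n_2$, so that if $n\ge\max(n_2,n_3)$, each of the three conditions (C1), (C2), (C3) holds with probability at least $1-\epsilon$.
   Context: $[n]=\{1,\dots,n\}$. A random variable $X$ is Bernoulli–Gaussian, $X\sim BG(\theta)$ with $\theta\in[0,1]$, if $X=W\cdot C$ where $W$ and $C$ are independent, $W$ is Bernoulli with parameter $\theta$ (i.e. $\Pr(W=1)=\theta$), and $C\sim\mathcal{N}(0,1)$. The support of a matrix or row vector is the set of indices of its nonzero entries. *)

theory Defs
  imports "HOL-Probability.Probability"
begin

text \<open>Matrices are indexed 0-based: rows i < m, columns j < n. A random matrix is a
  function on the index set {..<m} \<times> {..<n} (extensional, as in PiM).\<close>

definition idx :: "nat \<Rightarrow> nat \<Rightarrow> (nat \<times> nat) set" where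
  "idx m n = {..<m} \<times> {..<n}"

definition std_gauss :: "real measure" where
  "std_gauss = density lborel std_normal_density"

definition BG :: "real \<Rightarrow> real measure" where
  "BG \<theta> = distr (measure_pmf (bernoulli_pmf \<theta>) \<Otimes>\<^sub>M std_gauss) borel
              (\<lambda>(w, c). (if w then 1 else 0) * c)"

text \<open>Gaussian N(0, 1/m) (variance 1/m, standard deviation sqrt(1/m)).\<close>
definition gauss_var :: "real \<Rightarrow> real measure" where
  "gauss_var v = density lborel (normal_density 0 (sqrt v))"

definition DX_measure :: "nat \<Rightarrow> nat \<Rightarrow> real \<Rightarrow> ((nat \<times> nat \<Rightarrow> real) \<times> (nat \<times> nat \<Rightarrow> real)) measure" where
  "DX_measure m n \<theta> =
     (PiM (idx m m) (\<lambda>_. gauss_var (1 / real m))) \<Otimes>\<^sub>M (PiM (idx m n) (\<lambda>_. BG \<theta>))"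

definition supp :: "nat \<Rightarrow> nat \<Rightarrow> (nat \<times> nat \<Rightarrow> real) \<Rightarrow> (nat \<times> nat) set" where
  "supp m n X = {(i, j) \<in> idx m n. X (i, j) \<noteq> 0}"

definition row_supp :: "nat \<Rightarrow> (nat \<times> nat \<Rightarrow> real) \<Rightarrow> nat \<Rightarrow> nat set" where
  "row_supp n X i = {j \<in> {..<n}. X (i, j) \<noteq> 0}"

definition C1 :: "nat \<Rightarrow> nat \<Rightarrow> (nat \<times> nat \<Rightarrow> real) \<Rightarrow> bool" where
  "C1 m n X \<longleftrightarrow> real n \<ge> real m + real (card (supp m n X)) / real m - 1"

definition C2 :: "nat \<Rightarrow> nat \<Rightarrow> (nat \<times> nat \<Rightarrow> real) \<Rightarrow> bool" where
  "C2 m n X \<longleftrightarrow> (\<forall>i<m. card ({..<n} - row_supp n X i) \<ge> m - 1)"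

definition C3 :: "nat \<Rightarrow> nat \<Rightarrow> (nat \<times> nat \<Rightarrow> real) \<Rightarrow> bool" where
  "C3 m n X \<longleftrightarrow> (\<forall>i<m. \<forall>i'<m. i' \<noteq> i \<longrightarrow> (\<exists>j<n. X (i, j) = 0 \<and> X (i', j) \<noteq> 0))"

definition n1 :: "nat \<Rightarrow> real \<Rightarrow> real \<Rightarrow> real" where
  "n1 m \<theta> \<epsilon> = (let a = 1 - ln \<epsilon> / (4 * real m * (real m - 1) * (1 - \<theta>)) in
     (real m - 1) / (1 - \<theta>) * (a + sqrt (a\<^sup>2 - 1)))"

definition n2 :: "nat \<Rightarrow> real \<Rightarrow> real \<Rightarrow> real" where
  "n2 m \<theta> \<epsilon> = (let a = 1 - (ln \<epsilon> - ln (real m)) / (4 * (real m - 1) * (1 - \<theta>)) in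
     (real m - 1) / (1 - \<theta>) * (a + sqrt (a\<^sup>2 - 1)))"

definition n3 :: "nat \<Rightarrow> real \<Rightarrow> real \<Rightarrow> real" where
  "n3 m \<theta> \<epsilon> = (ln \<epsilon> - ln (real m) - ln (real m - 1)) / ln (1 - \<theta> * (1 - \<theta>))"

end

theory Submission
  imports Defs
begin

text \<open>The three conditions only concern the support of \<open>X\<^sub>0\<close>, whose entries are independently
  nonzero with probability \<open>\<theta>\<close>.
  Conditions (C1) and (C2) say that the number of nonzero entries of the whole matrix,
  resp. of each row, is at most \<open>r (n - (m - 1))\<close> for \<open>r = m\<close>, resp. \<open>r = 1\<close>.
  Hoeffding's inequality bounds the probability of exceeding this by
  \<open>exp (- 2 r (n (1 - \<theta>) - (m - 1))\<^sup>2 / n)\<close>, which is at most \<open>exp (- r s)\<close> as soon as \<open>n\<close>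
  exceeds the larger root of a quadratic; \<open>n\<^sub>1\<close> and \<open>n\<^sub>2\<close> are these roots for
  \<open>r s = - ln \<epsilon>\<close> and for \<open>s = ln m - ln \<epsilon>\<close> (followed by a union bound over the rows).
  Condition (C3) fails for rows \<open>i \<noteq> i'\<close> only if no column \<open>j\<close> has
  \<open>X\<^sub>0 i j = 0 \<noteq> X\<^sub>0 i' j\<close>; the columns are independent, so this has probability
  \<open>(1 - \<theta> (1 - \<theta>))\<^sup>n\<close>, and \<open>n\<^sub>3\<close> makes the union bound over the \<open>m (m - 1)\<close> pairs at most \<open>\<epsilon>\<close>.\<close>

lemma prob_space_std_gauss: "prob_space std_gauss"
  unfolding std_gauss_def by (rule prob_space_normal_density) simp

lemma sets_std_gauss [measurable_cong]: "sets std_gauss = sets borel"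
  unfolding std_gauss_def by simp

lemma emeasure_std_gauss_singleton: "emeasure std_gauss {x} = 0"
proof -
  have "AE y in lborel. y \<in> {x} \<longrightarrow> ennreal (std_normal_density y) = 0"
    using AE_lborel_singleton[of x] by (rule eventually_mono) auto
  then have "{x} \<in> null_sets (density lborel std_normal_density)"
    by (subst null_sets_density_iff) auto
  then show ?thesis
    unfolding std_gauss_def by auto
qed

lemma BG_measurable:
  "(\<lambda>(w, c). (if w then 1 else 0) * c) \<in> borel_measurable (measure_pmf (bernoulli_pmf \<theta>) \<Otimes>\<^sub>M std_gauss)"
  by measurable

lemma prob_space_BG: "prob_space (BG \<theta>)"
  unfolding BG_def
  by (intro prob_space.prob_space_distr prob_space_pair prob_space_measure_pmf
      prob_space_std_gauss BG_measurable)

lemma sets_BG [measurable_cong]: "sets (BG \<theta>) = sets borel"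
  unfolding BG_def by simp

lemma space_BG [simp]: "space (BG \<theta>) = UNIV"
  using sets_eq_imp_space_eq[OF sets_BG] by simp

lemma measure_BG_nonzero:
  assumes "0 \<le> \<theta>" "\<theta> \<le> 1"
  shows "measure (BG \<theta>) (- {0}) = \<theta>"
proof -
  interpret G: prob_space std_gauss
    by (rule prob_space_std_gauss)
  have space_std_gauss: "space std_gauss = UNIV"
    using sets_eq_imp_space_eq[OF sets_std_gauss] by simp
  have "measure std_gauss (- {0}) = 1"
    using G.prob_compl[of "{0}"] emeasure_std_gauss_singleton
    by (simp add: space_std_gauss Compl_eq_Diff_UNIV measure_def)
  then have "emeasure std_gauss (- {0}) = 1"
    by (simp add: G.emeasure_eq_measure)
  moreover have "(\<lambda>(w, c). (if w then 1 else 0) * c) -` (- {0::real}) \<inter>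
      space (measure_pmf (bernoulli_pmf \<theta>) \<Otimes>\<^sub>M std_gauss) = {True} \<times> (- {0})"
    by (auto simp: space_pair_measure space_std_gauss split: if_splits)
  ultimately have "emeasure (BG \<theta>) (- {0}) = emeasure (measure_pmf (bernoulli_pmf \<theta>)) {True}"
    unfolding BG_def
    by (simp add: emeasure_distr[OF BG_measurable] G.emeasure_pair_measure_Times)
  also have "\<dots> = ennreal \<theta>"
    using assms by (simp add: emeasure_pmf_single)
  finally show ?thesis
    using assms by (simp add: measure_def)
qed

lemma measure_BG_zero:
  assumes "0 \<le> \<theta>" "\<theta> \<le> 1"
  shows "measure (BG \<theta>) {0} = 1 - \<theta>"
  using prob_space.prob_compl[OF prob_space_BG, of "{0}" \<theta>] measure_BG_nonzero[OF assms]
  by (simp add: Compl_eq_Diff_UNIV)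

lemma prob_space_gauss_var: "0 < v \<Longrightarrow> prob_space (gauss_var v)"
  unfolding gauss_var_def by (rule prob_space_normal_density) simp

lemma (in product_prob_space) indep_vars_PiM_coordinates:
  assumes "finite I"
  shows "prob_space.indep_vars (PiM I M) M (\<lambda>i x. x i) I"
proof -
  interpret P: prob_space "PiM I M"
    by (rule prob_space_PiM) (rule M.prob_space_axioms)
  show ?thesis
  proof (cases "I = {}")
    case True
    then show ?thesis
      unfolding P.indep_vars_def P.indep_sets_def by simp
  next
    case False
    have "(\<Pi>\<^sub>M i\<in>I. distr (PiM I M) (M i) (\<lambda>x. x i)) = PiM I M"
      by (rule PiM_cong) (auto intro: distr_PiM_component M.prob_space_axioms)
    moreover have "distr (PiM I M) (PiM I M) (\<lambda>x. \<lambda>i\<in>I. x i) = PiM I M"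
      using distr_PiM_restrict_finite[OF assms order_refl] by simp
    ultimately show ?thesis
      by (subst P.indep_vars_iff_distr_eq_PiM'[OF False]) auto
  qed
qed

lemma measure_pair_measure_snd:
  assumes "prob_space D" "prob_space P" "{x \<in> space P. Q x} \<in> sets P"
  shows "measure (D \<Otimes>\<^sub>M P) {z \<in> space (D \<Otimes>\<^sub>M P). Q (snd z)} = measure P {x \<in> space P. Q x}"
proof -
  interpret D: prob_space D by fact
  interpret P: prob_space P by fact
  have "{z \<in> space (D \<Otimes>\<^sub>M P). Q (snd z)} = space D \<times> {x \<in> space P. Q x}"
    by (auto simp: space_pair_measure)
  moreover have "emeasure (D \<Otimes>\<^sub>M P) (space D \<times> {x \<in> space P. Q x}) = emeasure P {x \<in> space P. Q x}"
    using assms(3) by (simp add: P.emeasure_pair_measure_Times D.emeasure_space_1)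
  ultimately show ?thesis
    by (simp add: measure_def)
qed

text \<open>The larger root in \<open>n\<close> of \<open>2 (n c - k)\<^sup>2 = n s\<close>.\<close>

definition hoeffding_threshold :: "real \<Rightarrow> real \<Rightarrow> real \<Rightarrow> real" where
  "hoeffding_threshold k c s = (let a = 1 + s / (4 * k * c) in k / c * (a + sqrt (a\<^sup>2 - 1)))"

lemma hoeffding_threshold_mono:
  assumes "k > 0" "c > 0" "0 \<le> s" "s \<le> s'"
  shows "hoeffding_threshold k c s \<le> hoeffding_threshold k c s'"
proof -
  define a a' where "a = 1 + s / (4 * k * c)" and "a' = 1 + s' / (4 * k * c)"
  have "1 \<le> a" "a \<le> a'"
    using assms by (auto simp: a_def a'_def divide_right_mono)
  then have "a + sqrt (a\<^sup>2 - 1) \<le> a' + sqrt (a'\<^sup>2 - 1)"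
    by (intro add_mono real_sqrt_le_mono diff_right_mono power_mono) auto
  then show ?thesis
    unfolding hoeffding_threshold_def Let_def a_def[symmetric] a'_def[symmetric]
    using assms by (intro mult_left_mono) auto
qed

lemma n1_eq_hoeffding_threshold:
  "n1 m \<theta> \<epsilon> = hoeffding_threshold (real m - 1) (1 - \<theta>) (- ln \<epsilon> / real m)"
  by (simp add: n1_def hoeffding_threshold_def mult_ac)

lemma n2_eq_hoeffding_threshold:
  "n2 m \<theta> \<epsilon> = hoeffding_threshold (real m - 1) (1 - \<theta>) (ln (real m) - ln \<epsilon>)"
proof -
  have "1 - (ln \<epsilon> - ln (real m)) / (4 * (real m - 1) * (1 - \<theta>))
      = 1 + (ln (real m) - ln \<epsilon>) / (4 * (real m - 1) * (1 - \<theta>))"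
    by (simp add: diff_divide_distrib)
  then show ?thesis
    by (simp only: n2_def hoeffding_threshold_def)
qed

lemma n1_le_n2:
  assumes "2 \<le> m" "\<theta> < 1" "0 < \<epsilon>" "\<epsilon> \<le> 1"
  shows "n1 m \<theta> \<epsilon> \<le> n2 m \<theta> \<epsilon>"
proof -
  have ln: "0 \<le> - ln \<epsilon>" "0 \<le> ln (real m)"
    using assms by auto
  then have "- ln \<epsilon> / real m \<le> - ln \<epsilon> / 1"
    using assms(1) by (intro divide_left_mono) auto
  then have "- ln \<epsilon> / real m \<le> ln (real m) - ln \<epsilon>"
    using ln by simp
  moreover have "0 \<le> - ln \<epsilon> / real m"
    using ln by (intro divide_nonneg_nonneg) auto
  ultimately show ?thesis
    unfolding n1_eq_hoeffding_threshold n2_eq_hoeffding_threshold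
    using assms by (intro hoeffding_threshold_mono) auto
qed

lemma hoeffding_threshold_le_imp_quadratic:
  assumes k: "k > 0" and c: "c > 0" and s: "s \<ge> 0" and n: "n \<ge> hoeffding_threshold k c s"
  shows "k \<le> n * c" and "n * s \<le> 2 * (n * c - k)\<^sup>2"
proof -
  define a where "a = 1 + s / (4 * k * c)"
  define t where "t = n * c / k"
  have a: "1 \<le> a"
    using k c s by (simp add: a_def)
  have "k / c * (a + sqrt (a\<^sup>2 - 1)) \<le> n"
    using n by (simp add: hoeffding_threshold_def Let_def a_def)
  then have root: "sqrt (a\<^sup>2 - 1) \<le> t - a"
    using k c by (simp add: t_def field_simps)
  have "0 \<le> a\<^sup>2 - 1"
    using a by simp
  then have sqrt_nonneg: "0 \<le> sqrt (a\<^sup>2 - 1)" and sqrt_sq: "(sqrt (a\<^sup>2 - 1))\<^sup>2 = a\<^sup>2 - 1"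
    by simp_all
  have t: "1 \<le> t"
    using a root sqrt_nonneg by linarith
  have "a\<^sup>2 - 1 \<le> (t - a)\<^sup>2"
    using power_mono[OF root sqrt_nonneg, of 2] sqrt_sq by simp
  then have quad: "2 * a * t \<le> t\<^sup>2 + 1"
    by (simp add: power2_eq_square algebra_simps)
  have nck: "n * c - k = k * (t - 1)"
    using k by (simp add: t_def field_simps)
  moreover have "0 \<le> k * (t - 1)"
    using k t by simp
  ultimately show "k \<le> n * c"
    by linarith
  have "n * s = 4 * k\<^sup>2 * t * (a - 1)"
    using k c by (simp add: t_def a_def power2_eq_square field_simps)
  also have "\<dots> = 2 * k\<^sup>2 * (2 * a * t - 2 * t)"
    by (simp add: algebra_simps)
  also have "\<dots> \<le> 2 * k\<^sup>2 * (t\<^sup>2 + 1 - 2 * t)"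
    using quad by (intro mult_left_mono) auto
  also have "\<dots> = 2 * (k * (t - 1))\<^sup>2"
    by (simp add: power2_eq_square algebra_simps)
  finally show "n * s \<le> 2 * (n * c - k)\<^sup>2"
    by (simp only: nck)
qed

lemma mult_power_le_if_ge_log_ratio:
  fixes q c \<epsilon> :: real
  assumes "0 < q" "q < 1" "0 < c" "0 < \<epsilon>" "(ln \<epsilon> - ln c) / ln q \<le> real n"
  shows "c * q ^ n \<le> \<epsilon>"
proof -
  have "ln q < 0"
    using assms by simp
  then have "ln c + real n * ln q \<le> ln \<epsilon>"
    using assms(5) by (simp add: divide_le_eq algebra_simps)
  then have "exp (ln c + real n * ln q) \<le> \<epsilon>"
    using assms by (metis exp_le_cancel_iff exp_ln)
  then show ?thesis
    using assms by (simp add: exp_add exp_of_nat_mult)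
qed

lemma real_card_filter_eq_sum_of_bool:
  "finite J \<Longrightarrow> real (card {k \<in> J. Q k}) = (\<Sum>k\<in>J. of_bool (Q k))"
  by (simp add: Collect_conj_eq)

lemma supp_eq: "supp m n X = {k \<in> idx m n. X k \<noteq> 0}"
  by (auto simp: supp_def)

lemma card_row_supp: "card (row_supp n X i) = card {k \<in> {i} \<times> {..<n}. X k \<noteq> 0}"
proof -
  have "{k \<in> {i} \<times> {..<n}. X k \<noteq> 0} = Pair i ` row_supp n X i"
    by (auto simp: row_supp_def)
  then show ?thesis
    by (simp add: card_image inj_on_def)
qed

lemma C1_iff:
  assumes "0 < m"
  shows "C1 m n X \<longleftrightarrow> real (card {k \<in> idx m n. X k \<noteq> 0}) \<le> real m * (real n - (real m - 1))"
  using assms by (simp add: C1_def supp_eq field_simps)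

lemma C2_iff:
  assumes "0 < m"
  shows "C2 m n X \<longleftrightarrow> (\<forall>i<m. real (card {k \<in> {i} \<times> {..<n}. X k \<noteq> 0}) \<le> real n - (real m - 1))"
proof -
  have "m - 1 \<le> card ({..<n} - row_supp n X i) \<longleftrightarrow> real (card (row_supp n X i)) \<le> real n - (real m - 1)"
    for i
  proof -
    have "row_supp n X i \<subseteq> {..<n}"
      by (auto simp: row_supp_def)
    then have "card (row_supp n X i) \<le> n" "card ({..<n} - row_supp n X i) = n - card (row_supp n X i)"
      using card_mono[of "{..<n}"] by (auto simp: card_Diff_subset finite_subset)
    then show ?thesis
      using assms by linarith
  qed
  then show ?thesis
    by (simp add: C2_def card_row_supp)
qed

locale iid_BG =
  fixes \<theta> :: real and I :: "'i set"
  assumes finite_I: "finite I" and \<theta>_nonneg: "0 \<le> \<theta>" and \<theta>_le_1: "\<theta> \<le> 1"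
begin

abbreviation P :: "('i \<Rightarrow> real) measure" where
  "P \<equiv> \<Pi>\<^sub>M k\<in>I. BG \<theta>"

sublocale prob_space P
  by (intro prob_space_PiM prob_space_BG)

sublocale PP: product_prob_space "\<lambda>_. BG \<theta>" I
  by (intro product_prob_spaceI prob_space_BG)

lemma indep_vars_coordinates: "indep_vars (\<lambda>_. BG \<theta>) (\<lambda>k x. x k) I"
  by (rule PP.indep_vars_PiM_coordinates[OF finite_I])

lemma prob_nonzero:
  assumes "k \<in> I"
  shows "prob {x \<in> space P. x k \<noteq> 0} = \<theta>"
proof -
  have "emeasure P {x \<in> space P. x k \<in> - {0}} = emeasure (BG \<theta>) (- {0})"
    using assms by (intro PP.emeasure_PiM_Collect_single) auto
  then show ?thesis
    using measure_BG_nonzero[OF \<theta>_nonneg \<theta>_le_1] by (simp add: measure_def)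
qed

lemma prob_zero_nonzero:
  assumes "k \<in> I" "l \<in> I" "k \<noteq> l"
  shows "prob {x \<in> space P. x k = 0 \<and> x l \<noteq> 0} = (1 - \<theta>) * \<theta>"
proof -
  define A where "A i = (if i = k then {0} else - {0::real})" for i
  have "{x \<in> space P. x k = 0 \<and> x l \<noteq> 0} = {x \<in> space P. \<forall>i\<in>{k, l}. x i \<in> A i}"
    using assms(3) by (auto simp: A_def)
  moreover have "emeasure P {x \<in> space P. \<forall>i\<in>{k, l}. x i \<in> A i} = (\<Prod>i\<in>{k, l}. emeasure (BG \<theta>) (A i))"
    using assms by (intro PP.emeasure_PiM_Collect) (auto simp: A_def)
  moreover have "(\<Prod>i\<in>{k, l}. emeasure (BG \<theta>) (A i)) = ennreal ((1 - \<theta>) * \<theta>)"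
    using assms(3) \<theta>_nonneg \<theta>_le_1
    by (simp add: A_def PP.M.emeasure_eq_measure measure_BG_zero measure_BG_nonzero ennreal_mult)
  ultimately show ?thesis
    using \<theta>_nonneg \<theta>_le_1 by (simp add: measure_def)
qed

lemma card_nonzero_measurable:
  assumes "J \<subseteq> I"
  shows "(\<lambda>x. real (card {k \<in> J. x k \<noteq> 0})) \<in> borel_measurable P"
proof -
  have "finite J"
    using assms finite_I finite_subset by blast
  then show ?thesis
    using assms by (simp only: real_card_filter_eq_sum_of_bool) (intro borel_measurable_sum; measurable; auto)
qed

lemma prob_card_nonzero_ge:
  assumes J: "J \<subseteq> I" "J \<noteq> {}" and e: "0 \<le> e"
  shows "prob {x \<in> space P. card J * \<theta> + e \<le> real (card {k \<in> J. x k \<noteq> 0})}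
    \<le> exp (- 2 * e\<^sup>2 / card J)"
proof -
  have fin: "finite J"
    using J finite_I finite_subset by blast
  define Y where "Y k x = (of_bool (x k \<noteq> 0) :: real)" for k and x :: "'i \<Rightarrow> real"
  have indep: "indep_vars (\<lambda>_. borel) Y I"
    unfolding Y_def by (rule indep_vars_compose2[OF indep_vars_coordinates]) measurable
  interpret H: Hoeffding_ineq P J Y "\<lambda>_. 0" "\<lambda>_. 1" "\<Sum>k\<in>J. expectation (Y k)"
  proof unfold_locales
    show "indep_vars (\<lambda>_. borel) Y J"
      using indep J(1) by (rule indep_vars_subset)
  qed (simp_all add: fin Y_def)
  have "expectation (Y k) = \<theta>" if "k \<in> J" for k
  proof -
    have "expectation (Y k) = expectation (indicator {x \<in> space P. x k \<noteq> 0})"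
      by (intro Bochner_Integration.integral_cong) (auto simp: Y_def)
    then show ?thesis
      using prob_nonzero that J by (simp add: Int_absorb2 subsetD)
  qed
  then have mean: "(\<Sum>k\<in>J. expectation (Y k)) = card J * \<theta>"
    by simp
  have count: "(\<Sum>k\<in>J. Y k x) = real (card {k \<in> J. x k \<noteq> 0})" for x
    using fin by (simp add: Y_def Collect_conj_eq)
  have width: "(\<Sum>k\<in>J. ((1::real) - 0)\<^sup>2) = card J"
    by simp
  have "0 < (\<Sum>k\<in>J. ((1::real) - 0)\<^sup>2)"
    using fin J by (simp add: card_gt_0_iff)
  then have "prob {x \<in> space P. (\<Sum>k\<in>J. expectation (Y k)) + e \<le> (\<Sum>k\<in>J. Y k x)}
      \<le> exp (- 2 * e\<^sup>2 / (\<Sum>k\<in>J. ((1::real) - 0)\<^sup>2))"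
    by (rule H.Hoeffding_ineq_ge[OF e])
  then show ?thesis
    by (simp only: mean count width)
qed

lemma prob_card_nonzero_gt_le:
  fixes r n :: nat and k s :: real
  assumes J: "J \<subseteq> I" "card J = r * n" and r: "0 < r" and n: "0 < n" and \<theta>: "\<theta> < 1"
    and k: "0 < k" and s: "0 \<le> s" and n_ge: "hoeffding_threshold k (1 - \<theta>) s \<le> real n"
  shows "prob {x \<in> space P. r * (real n - k) < real (card {j \<in> J. x j \<noteq> 0})} \<le> exp (- (r * s))"
proof -
  define c where "c = 1 - \<theta>"
  have c: "0 < c"
    using \<theta> by (simp add: c_def)
  have "k \<le> n * c" and quad: "n * s \<le> 2 * (n * c - k)\<^sup>2"
    using hoeffding_threshold_le_imp_quadratic[OF k c s] n_ge by (simp_all add: c_def)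
  define e where "e = r * (n * c - k)"
  have e: "0 \<le> e"
    using \<open>k \<le> n * c\<close> by (simp add: e_def)
  have "J \<noteq> {}"
    using J r n by auto
  have shift: "card J * \<theta> + e = r * (real n - k)"
    by (simp add: J(2) e_def c_def algebra_simps)
  have "r * s * card J \<le> 2 * e\<^sup>2"
  proof -
    have "real r * (r * (n * s)) \<le> real r * (r * (2 * (n * c - k)\<^sup>2))"
      using quad by (intro mult_left_mono) auto
    then show ?thesis
      by (simp add: J(2) e_def power2_eq_square algebra_simps)
  qed
  then have exponent: "- 2 * e\<^sup>2 / card J \<le> - (r * s)"
    using J r n by (simp add: field_simps)
  have "prob {x \<in> space P. r * (real n - k) < real (card {j \<in> J. x j \<noteq> 0})}
      \<le> prob {x \<in> space P. card J * \<theta> + e \<le> real (card {j \<in> J. x j \<noteq> 0})}"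
    using card_nonzero_measurable[OF J(1)] unfolding shift
    by (intro finite_measure_mono) auto
  also have "\<dots> \<le> exp (- 2 * e\<^sup>2 / card J)"
    by (rule prob_card_nonzero_ge[OF J(1) \<open>J \<noteq> {}\<close> e])
  also have "\<dots> \<le> exp (- (r * s))"
    using exponent by simp
  finally show ?thesis .
qed

lemma prob_no_zero_nonzero_pair:
  fixes a b :: "'j \<Rightarrow> 'i"
  assumes J: "finite J" and ab: "\<And>j. j \<in> J \<Longrightarrow> a j \<in> I \<and> b j \<in> I \<and> a j \<noteq> b j"
    and disj: "disjoint_family_on (\<lambda>j. {a j, b j}) J"
  shows "prob {x \<in> space P. \<forall>j\<in>J. \<not> (x (a j) = 0 \<and> x (b j) \<noteq> 0)} = (1 - \<theta> * (1 - \<theta>)) ^ card J"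
proof (cases "J = {}")
  case True
  then show ?thesis
    by (simp add: prob_space)
next
  case False
  define K where "K j = {a j, b j}" for j
  define V where "V j x = restrict x (K j)" for j and x :: "'i \<Rightarrow> real"
  define A where "A j = {f \<in> space (\<Pi>\<^sub>M k\<in>K j. BG \<theta>). \<not> (f (a j) = 0 \<and> f (b j) \<noteq> 0)}" for j
  have indep: "indep_vars (\<lambda>j. \<Pi>\<^sub>M k\<in>K j. BG \<theta>) V J"
    unfolding V_def
    by (rule indep_vars_restrict[OF indep_vars_coordinates]) (use ab disj in \<open>auto simp: K_def[abs_def]\<close>)
  have A_sets: "A j \<in> sets (\<Pi>\<^sub>M k\<in>K j. BG \<theta>)" for j
    unfolding A_def K_def by measurable
  have "V j x \<in> space (\<Pi>\<^sub>M k\<in>K j. BG \<theta>)" for j x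
    by (simp add: V_def space_PiM)
  then have preimage: "V j -` A j \<inter> space P = {x \<in> space P. \<not> (x (a j) = 0 \<and> x (b j) \<noteq> 0)}" for j
    by (auto simp: A_def V_def K_def)
  have "{x \<in> space P. \<forall>j\<in>J. \<not> (x (a j) = 0 \<and> x (b j) \<noteq> 0)} = (\<Inter>j\<in>J. V j -` A j \<inter> space P)"
    using False by (auto simp: preimage)
  also have "prob \<dots> = (\<Prod>j\<in>J. prob (V j -` A j \<inter> space P))"
    by (rule indep_varsD[OF indep False J order_refl A_sets])
  also have "\<dots> = (\<Prod>j\<in>J. 1 - \<theta> * (1 - \<theta>))"
  proof (rule prod.cong)
    fix j
    assume "j \<in> J"
    then have ab_j: "a j \<in> I" "b j \<in> I" "a j \<noteq> b j"
      using ab by auto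
    then have "{x \<in> space P. x (a j) = 0 \<and> x (b j) \<noteq> 0} \<in> events"
      by measurable
    from prob_neg[OF this] prob_zero_nonzero[OF ab_j]
    show "prob (V j -` A j \<inter> space P) = 1 - \<theta> * (1 - \<theta>)"
      by (simp add: preimage algebra_simps)
  qed simp
  finally show ?thesis
    by simp
qed

end

locale BG_matrix = iid_BG \<theta> "idx m n" for \<theta> :: real and m n :: nat
begin

lemma sets_C1: "{X \<in> space P. C1 m n X} \<in> events"
  using card_nonzero_measurable[of "idx m n"] unfolding C1_def supp_eq by measurable

lemma sets_row_count_gt:
  assumes "i < m"
  shows "{X \<in> space P. t < real (card {k \<in> {i} \<times> {..<n}. X k \<noteq> 0})} \<in> events"
proof -
  have "{i} \<times> {..<n} \<subseteq> idx m n"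
    using assms by (auto simp: idx_def)
  from card_nonzero_measurable[OF this] show ?thesis
    by measurable
qed

lemma C2_events_eq:
  assumes "0 < m"
  shows "{X \<in> space P. C2 m n X}
    = space P - (\<Union>i<m. {X \<in> space P. real n - (real m - 1) < real (card {k \<in> {i} \<times> {..<n}. X k \<noteq> 0})})"
  using assms by (auto simp: C2_iff not_le)

lemma sets_C2:
  assumes "0 < m"
  shows "{X \<in> space P. C2 m n X} \<in> events"
  unfolding C2_events_eq[OF assms] using sets_row_count_gt by blast

lemma sets_no_zero_nonzero_pair:
  assumes "i < m" "i' < m"
  shows "{X \<in> space P. \<forall>j\<in>{..<n}. \<not> (X (i, j) = 0 \<and> X (i', j) \<noteq> 0)} \<in> events"
  using assms by (simp add: idx_def) measurable

lemma C3_events_eq: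
  "{X \<in> space P. C3 m n X}
    = space P - (\<Union>i<m. \<Union>i'\<in>{..<m} - {i}. {X \<in> space P. \<forall>j\<in>{..<n}. \<not> (X (i, j) = 0 \<and> X (i', j) \<noteq> 0)})"
  by (auto simp: C3_def)

lemma sets_C3: "{X \<in> space P. C3 m n X} \<in> events"
  unfolding C3_events_eq using sets_no_zero_nonzero_pair by blast

lemma prob_C1:
  assumes m: "2 \<le> m" and n: "0 < n" and \<theta>: "\<theta> < 1" and \<epsilon>: "0 < \<epsilon>" "\<epsilon> \<le> 1"
    and n_ge: "n1 m \<theta> \<epsilon> \<le> real n"
  shows "1 - \<epsilon> \<le> prob {X \<in> space P. C1 m n X}"
proof -
  have "card (idx m n) = m * n"
    by (simp add: idx_def card_cartesian_product)
  moreover have "0 \<le> - ln \<epsilon> / real m"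
    using \<epsilon> by (intro divide_nonneg_nonneg) auto
  moreover have "hoeffding_threshold (real m - 1) (1 - \<theta>) (- ln \<epsilon> / real m) \<le> real n"
    using n_ge by (simp add: n1_eq_hoeffding_threshold)
  ultimately have "prob {X \<in> space P. real m * (real n - (real m - 1)) < real (card {k \<in> idx m n. X k \<noteq> 0})}
      \<le> exp (- (real m * (- ln \<epsilon> / real m)))"
    using m n \<theta> by (intro prob_card_nonzero_gt_le) auto
  also have "\<dots> = \<epsilon>"
    using m \<epsilon> by simp
  finally have "prob {X \<in> space P. \<not> C1 m n X} \<le> \<epsilon>"
    using m by (simp add: C1_iff not_le)
  then show ?thesis
    using prob_neg[OF sets_C1] by simp
qed

lemma prob_C2:
  assumes m: "2 \<le> m" and n: "0 < n" and \<theta>: "\<theta> < 1" and \<epsilon>: "0 < \<epsilon>" "\<epsilon> \<le> real m"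
    and n_ge: "n2 m \<theta> \<epsilon> \<le> real n"
  shows "1 - \<epsilon> \<le> prob {X \<in> space P. C2 m n X}"
proof -
  define F where "F i = {X \<in> space P. real n - (real m - 1) < real (card {k \<in> {i} \<times> {..<n}. X k \<noteq> 0})}"
    for i
  have prob_F: "prob (F i) \<le> \<epsilon> / real m" if "i < m" for i
  proof -
    have "{i} \<times> {..<n} \<subseteq> idx m n" "card ({i} \<times> {..<n}) = 1 * n"
      using that by (auto simp: idx_def card_cartesian_product)
    moreover have "0 \<le> ln (real m) - ln \<epsilon>"
      using m \<epsilon> by simp
    moreover have "hoeffding_threshold (real m - 1) (1 - \<theta>) (ln (real m) - ln \<epsilon>) \<le> real n"
      using n_ge by (simp add: n2_eq_hoeffding_threshold)
    ultimately have "prob {X \<in> space P. real 1 * (real n - (real m - 1)) < real (card {k \<in> {i} \<times> {..<n}. X k \<noteq> 0})}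
        \<le> exp (- (real 1 * (ln (real m) - ln \<epsilon>)))"
      using m n \<theta> by (intro prob_card_nonzero_gt_le) auto
    then show ?thesis
      using m \<epsilon> by (simp add: F_def exp_diff)
  qed
  have F_sets: "F i \<in> events" if "i < m" for i
    unfolding F_def using that by (rule sets_row_count_gt)
  have "prob (\<Union>i<m. F i) \<le> (\<Sum>i<m. prob (F i))"
    by (rule finite_measure_subadditive_finite) (auto intro: F_sets)
  also have "\<dots> \<le> (\<Sum>i<m. \<epsilon> / real m)"
    by (rule sum_mono) (simp add: prob_F)
  also have "\<dots> = \<epsilon>"
    using m by simp
  finally have "prob (\<Union>i<m. F i) \<le> \<epsilon>" .
  moreover have "{X \<in> space P. C2 m n X} = space P - (\<Union>i<m. F i)"
    using m by (simp add: C2_events_eq F_def)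
  ultimately show ?thesis
    using F_sets by (simp add: prob_compl sets.finite_UN)
qed

lemma prob_C3:
  assumes m: "2 \<le> m" and \<theta>: "0 < \<theta>" "\<theta> < 1" and \<epsilon>: "0 < \<epsilon>" and n_ge: "n3 m \<theta> \<epsilon> \<le> real n"
  shows "1 - \<epsilon> \<le> prob {X \<in> space P. C3 m n X}"
proof -
  define q where "q = 1 - \<theta> * (1 - \<theta>)"
  define F where "F i i' = {X \<in> space P. \<forall>j\<in>{..<n}. \<not> (X (i, j) = 0 \<and> X (i', j) \<noteq> 0)}" for i i'
  have prob_F: "prob (F i i') = q ^ n" if "i < m" "i' \<in> {..<m} - {i}" for i i'
    unfolding F_def q_def using that
    by (subst prob_no_zero_nonzero_pair) (auto simp: idx_def disjoint_family_on_def)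
  have F_sets: "F i i' \<in> events" if "i < m" "i' < m" for i i'
    unfolding F_def using that by (rule sets_no_zero_nonzero_pair)
  have "0 < \<theta> * (1 - \<theta>)" "\<theta> * (1 - \<theta>) < 1"
    using \<theta> by (auto intro: le_less_trans[of _ \<theta>] simp: mult_le_cancel_left1)
  then have q: "0 < q" "q < 1"
    by (auto simp: q_def)
  have "ln (real m * (real m - 1)) = ln (real m) + ln (real m - 1)"
    using m by (simp add: ln_mult)
  then have bound: "real m * (real m - 1) * q ^ n \<le> \<epsilon>"
    using m q \<epsilon> n_ge by (intro mult_power_le_if_ge_log_ratio) (auto simp: n3_def q_def diff_diff_eq)
  have "prob (\<Union>i<m. \<Union>i'\<in>{..<m} - {i}. F i i') \<le> (\<Sum>i<m. prob (\<Union>i'\<in>{..<m} - {i}. F i i'))"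
    by (rule finite_measure_subadditive_finite) (auto intro!: sets.finite_UN F_sets)
  also have "\<dots> \<le> (\<Sum>i<m. \<Sum>i'\<in>{..<m} - {i}. prob (F i i'))"
    by (intro sum_mono finite_measure_subadditive_finite) (auto intro!: F_sets)
  also have "\<dots> = (\<Sum>i<m. real (m - 1) * q ^ n)"
    by (intro sum.cong) (auto simp: prob_F)
  also have "\<dots> = real m * (real m - 1) * q ^ n"
    using m by (simp add: of_nat_diff)
  finally have "prob (\<Union>i<m. \<Union>i'\<in>{..<m} - {i}. F i i') \<le> \<epsilon>"
    using bound by linarith
  moreover have "{X \<in> space P. C3 m n X} = space P - (\<Union>i<m. \<Union>i'\<in>{..<m} - {i}. F i i')"
    by (simp add: C3_events_eq F_def)
  ultimately show ?thesis
    using F_sets by (simp add: prob_compl sets.finite_UN)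
qed

end

theorem proposition3:
  fixes m n :: nat and \<theta> \<epsilon> :: real
  assumes "m \<ge> 2" and "n \<ge> 1" and "0 < \<theta>" and "\<theta> < 1" and "0 < \<epsilon>" and "\<epsilon> < 1"
  defines "M \<equiv> DX_measure m n \<theta>"
  shows "(real n \<ge> n1 m \<theta> \<epsilon> \<longrightarrow>
            measure M {DX \<in> space M. C1 m n (snd DX)} \<ge> 1 - \<epsilon>)
       \<and> (real n \<ge> n2 m \<theta> \<epsilon> \<longrightarrow>
            measure M {DX \<in> space M. C2 m n (snd DX)} \<ge> 1 - \<epsilon>)
       \<and> (real n \<ge> n3 m \<theta> \<epsilon> \<longrightarrow>
            measure M {DX \<in> space M. C3 m n (snd DX)} \<ge> 1 - \<epsilon>)
       \<and> n1 m \<theta> \<epsilon> \<le> n2 m \<theta> \<epsilon>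
       \<and> (real n \<ge> max (n2 m \<theta> \<epsilon>) (n3 m \<theta> \<epsilon>) \<longrightarrow>
            measure M {DX \<in> space M. C1 m n (snd DX)} \<ge> 1 - \<epsilon> \<and>
            measure M {DX \<in> space M. C2 m n (snd DX)} \<ge> 1 - \<epsilon> \<and>
            measure M {DX \<in> space M. C3 m n (snd DX)} \<ge> 1 - \<epsilon>)"
proof -
  interpret BG_matrix \<theta> m n
    using assms(3,4) by unfold_locales (auto simp: idx_def)
  have "prob_space (\<Pi>\<^sub>M k\<in>idx m m. gauss_var (1 / real m))"
    using assms(1) by (intro prob_space_PiM prob_space_gauss_var) auto
  then have M_snd: "measure M {DX \<in> space M. Q (snd DX)} = prob {X \<in> space P. Q X}"
    if "{X \<in> space P. Q X} \<in> events" for Q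
    unfolding M_def DX_measure_def using prob_space_axioms that by (rule measure_pair_measure_snd)
  have "n1 m \<theta> \<epsilon> \<le> real n \<Longrightarrow> 1 - \<epsilon> \<le> measure M {DX \<in> space M. C1 m n (snd DX)}"
    using assms(1-6) prob_C1 by (simp add: M_snd sets_C1)
  moreover have "n2 m \<theta> \<epsilon> \<le> real n \<Longrightarrow> 1 - \<epsilon> \<le> measure M {DX \<in> space M. C2 m n (snd DX)}"
    using assms(1-6) prob_C2 by (simp add: M_snd sets_C2)
  moreover have "n3 m \<theta> \<epsilon> \<le> real n \<Longrightarrow> 1 - \<epsilon> \<le> measure M {DX \<in> space M. C3 m n (snd DX)}"
    using assms(1-6) prob_C3 by (simp add: M_snd sets_C3)
  moreover have "n1 m \<theta> \<epsilon> \<le> n2 m \<theta> \<epsilon>"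
    using assms(1-6) by (intro n1_le_n2) auto
  ultimately show ?thesis
    by auto
qed

end
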